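(* Let $\Sigma$ be a signature such that $\Sigma(n)$ is finite for every $n$. Then: (i) the Hopf algebra $\mathbf N(T(\Sigma))$ is commutative if and only if either $\Sigma=\emptyset$, or $\Sigma$ consists of exactly one element and this element has arity $0$; (ii) $\mathbf N(T(\Sigma))$ is cocommutative if and only if either all elements of $\Sigma$ have arity $0$ (i.e. $\Sigma=\Sigma(0)$), or $\Sigma$ consists of exactly one element and this element has arity $1$.
   Context: $\mathbb K$ is a field of characteristic zero and $\mathbb N=\{0,1,2,\dots\}$. A signature is a set $\Sigma$ with an arity map $|\cdot|:\Sigma\to\mathbb N$; $\Sigma(n)$ denotes the set of elements of arity $n$. A $\Sigma$-term is either the leaf $\bot$ or an expression $s(t_1,\dots,t_n)$ with $n\in\mathbb N$, $s\in\Sigma(n)$ and $t_1,\dots,t_n$ $\Sigma$-terms (a planar rooted tree whose internal nodes with $n$ children are decorated by elements of $\Sigma(n)$). The degree of a term is its number of internal nodes and its arity $|t|$ its number of leaves. $T(\Sigma)$ denotes the set of $\Sigma$-terms, viewed as the free nonsymmetric operad on $\Sigma$: $t[t_1,\dots,t_{|t|}]$ is obtained by grafting the root of each $t_i$ onto the $i$-th leaf of $t$ (leaves numbered from left to right), and the unit is $\bot$. A $\Sigma$-forest is a finite word of $\Sigma$-terms; it is reduced if none of its terms is $\bot$. For a word $w$ of terms, $\mathrm{rd}(w)$ is the subword of its terms different from $\bot$. The natural Hopf algebra $\mathbf N(T(\Sigma))$ is the $\mathbb K$-vector space with basis $\{E_f\}$ indexed by reduced $\Sigma$-forests $f$, with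 product $E_{f_1}E_{f_2}=E_{f_1f_2}$ (concatenation, unit $E_\epsilon$), and coproduct the unique algebra morphism such that for every term $t\neq\bot$, $\Delta E_t=\sum E_{\mathrm{rd}(t')}\otimes E_{\mathrm{rd}(t_1\cdots t_{|t'|})}$, the sum ranging over all $t',t_1,\dots,t_{|t'|}\in T(\Sigma)$ with $t=t'[t_1,\dots,t_{|t'|}]$ (with $E_{\mathrm{rd}(\bot)}=E_\epsilon$). *)

theory Defs
  imports Main "HOL-Library.Poly_Mapping"
begin

text \<open>A signature is a set S of symbols of type 'a together with an arity map
  ar. Terms: Leaf is the leaf (bottom); Node s ts is s(t1,...,tn).\<close>

datatype 'a tm = Leaf | Node 'a "'a tm list"

fun wf_tm :: "'a set \<Rightarrow> ('a \<Rightarrow> nat) \<Rightarrow> 'a tm \<Rightarrow> bool" where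
  "wf_tm S ar Leaf = True"
| "wf_tm S ar (Node s ts) = (s \<in> S \<and> length ts = ar s \<and> (\<forall>u\<in>set ts. wf_tm S ar u))"

fun leaves :: "'a tm \<Rightarrow> nat" where
  "leaves Leaf = 1"
| "leaves (Node s ts) = sum_list (map leaves ts)"

text \<open>Grafting: graft t us grafts the first leaves of t onto the first elements of us
  (leaves numbered left to right), returning the result and the unused rest of us.\<close>
fun graft :: "'a tm \<Rightarrow> 'a tm list \<Rightarrow> 'a tm \<times> 'a tm list"
and graftl :: "'a tm list \<Rightarrow> 'a tm list \<Rightarrow> 'a tm list \<times> 'a tm list" where
  "graft Leaf [] = (Leaf, [])"
| "graft Leaf (u # us) = (u, us)"
| "graft (Node s cs) us = (let (cs', r) = graftl cs us in (Node s cs', r))"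
| "graftl [] us = ([], us)"
| "graftl (c # cs) us = (let (c', r) = graft c us; (cs', r') = graftl cs r in (c' # cs', r'))"

text \<open>Operadic composition t[t1,...,t_|t|] (meaningful when length us = leaves t).\<close>
definition comp :: "'a tm \<Rightarrow> 'a tm list \<Rightarrow> 'a tm" where
  "comp t us = fst (graft t us)"

definition decomps :: "'a tm \<Rightarrow> ('a tm \<times> 'a tm list) set" where
  "decomps t = {(t', us). length us = leaves t' \<and> comp t' us = t}"

definition rd :: "'a tm list \<Rightarrow> 'a tm list" where
  "rd w = filter (\<lambda>u. u \<noteq> Leaf) w"

definition reduced_forest :: "'a set \<Rightarrow> ('a \<Rightarrow> nat) \<Rightarrow> 'a tm list \<Rightarrow> bool" where
  "reduced_forest S ar f = (\<forall>u\<in>set f. wf_tm S ar u \<and> u \<noteq> Leaf)"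

text \<open>An element of N(T(Sigma)) is a finitely supported K-linear combination of
  basis vectors E_f, f a reduced Sigma-forest; an element of the tensor square is a
  finitely supported combination of E_f (x) E_g, represented on pairs (f,g).\<close>

definition NT :: "'a set \<Rightarrow> ('a \<Rightarrow> nat) \<Rightarrow> ('a tm list \<Rightarrow>\<^sub>0 'k::field_char_0) set" where
  "NT S ar = {x. \<forall>f\<in>Poly_Mapping.keys x. reduced_forest S ar f}"

definition nmult :: "('a tm list \<Rightarrow>\<^sub>0 'k::field_char_0) \<Rightarrow> ('a tm list \<Rightarrow>\<^sub>0 'k) \<Rightarrow> ('a tm list \<Rightarrow>\<^sub>0 'k)" where
  "nmult x y = (\<Sum>f\<in>Poly_Mapping.keys x. \<Sum>g\<in>Poly_Mapping.keys y.
       Poly_Mapping.single (f @ g) (Poly_Mapping.lookup x f * Poly_Mapping.lookup y g))"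

definition tmult :: "('a tm list \<times> 'a tm list \<Rightarrow>\<^sub>0 'k::field_char_0) \<Rightarrow> ('a tm list \<times> 'a tm list \<Rightarrow>\<^sub>0 'k)
     \<Rightarrow> ('a tm list \<times> 'a tm list \<Rightarrow>\<^sub>0 'k)" where
  "tmult p q = (\<Sum>a\<in>Poly_Mapping.keys p. \<Sum>b\<in>Poly_Mapping.keys q.
       Poly_Mapping.single (fst a @ fst b, snd a @ snd b) (Poly_Mapping.lookup p a * Poly_Mapping.lookup q b))"

text \<open>Coproduct of a single term t (t \<noteq> Leaf):
  sum over t = t'[t1..tk] of E_rd(t') (x) E_rd(t1...tk), with E_rd(Leaf) = E_epsilon.\<close>
definition cop_tm :: "'a tm \<Rightarrow> ('a tm list \<times> 'a tm list \<Rightarrow>\<^sub>0 'k::field_char_0)" where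
  "cop_tm t = (\<Sum>d\<in>decomps t. Poly_Mapping.single (rd [fst d], rd (snd d)) 1)"

fun cop_forest :: "'a tm list \<Rightarrow> ('a tm list \<times> 'a tm list \<Rightarrow>\<^sub>0 'k::field_char_0)" where
  "cop_forest [] = Poly_Mapping.single ([], []) 1"
| "cop_forest (t # f) = tmult (cop_tm t) (cop_forest f)"

definition ncoprod :: "('a tm list \<Rightarrow>\<^sub>0 'k::field_char_0) \<Rightarrow> ('a tm list \<times> 'a tm list \<Rightarrow>\<^sub>0 'k)" where
  "ncoprod x = (\<Sum>f\<in>Poly_Mapping.keys x. \<Sum>p\<in>Poly_Mapping.keys (cop_forest f :: ('a tm list \<times> 'a tm list \<Rightarrow>\<^sub>0 'k)).
       Poly_Mapping.single p (Poly_Mapping.lookup x f * Poly_Mapping.lookup (cop_forest f) p))"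

definition tflip :: "('a tm list \<times> 'a tm list \<Rightarrow>\<^sub>0 'k::field_char_0) \<Rightarrow> ('a tm list \<times> 'a tm list \<Rightarrow>\<^sub>0 'k)" where
  "tflip p = (\<Sum>a\<in>Poly_Mapping.keys p. Poly_Mapping.single (snd a, fst a) (Poly_Mapping.lookup p a))"

definition NT_commutative :: "'k::field_char_0 itself \<Rightarrow> 'a set \<Rightarrow> ('a \<Rightarrow> nat) \<Rightarrow> bool" where
  "NT_commutative _ S ar = (\<forall>x\<in>(NT S ar :: ('a tm list \<Rightarrow>\<^sub>0 'k) set). \<forall>y\<in>NT S ar. nmult x y = nmult y x)"

definition NT_cocommutative :: "'k::field_char_0 itself \<Rightarrow> 'a set \<Rightarrow> ('a \<Rightarrow> nat) \<Rightarrow> bool" where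
  "NT_cocommutative _ S ar = (\<forall>x\<in>(NT S ar :: ('a tm list \<Rightarrow>\<^sub>0 'k) set). tflip (ncoprod x) = ncoprod x)"

end

theory Submission
  imports Defs
begin

text \<open>Since the product is concatenation of forests, N(T(\<Sigma>)) is commutative exactly when
  there is at most one non-trivial \<Sigma>-term, which happens only for \<Sigma> = {} or a single constant.
  Since the coproduct is multiplicative, N(T(\<Sigma>)) is cocommutative exactly when \<Delta> E_t is
  symmetric for every single term t, and the coefficients of \<Delta> E_t count decompositions
  t = t'[t1,...,tk] by the pair (rd(t'), rd(t1...tk)). For a constant s the coproduct is
  E_s \<otimes> 1 + 1 \<otimes> E_s, and for a unary s the chains s^n(\<bottom>) have
  \<Delta> = \<Sum>k E_(s^k) \<otimes> E_(s^(n-k)); both are symmetric. A symbol s of arity \<ge> 2 gives the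
  term s(c,c,\<bottom>,...) with a decomposition E_c \<otimes> E_(cc) that cannot be mirrored, as left factors
  are single trees; a unary s next to another symbol r gives s(r(\<bottom>,...)) with a decomposition
  E_(s(\<bottom>)) \<otimes> E_(r(\<bottom>,...)) that cannot be mirrored, as every left factor has root s.\<close>

fun subterms :: "'a tm \<Rightarrow> 'a tm set" where
  "subterms Leaf = {Leaf}"
| "subterms (Node s ts) = insert (Node s ts) (\<Union>u\<in>set ts. subterms u)"

fun prefixes :: "'a tm \<Rightarrow> 'a tm set" where
  "prefixes Leaf = {Leaf}"
| "prefixes (Node s ts) = insert Leaf (Node s ` {cs. list_all2 (\<in>) cs (map prefixes ts)})"

lemma subterms_self: "u \<in> subterms u"
  by (cases u) auto

lemma finite_subterms: "finite (subterms t)"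
  by (induction t) auto

lemma Leaf_in_prefixes: "Leaf \<in> prefixes t"
  by (cases t) auto

lemma finite_list_all2_mem: "\<forall>X\<in>set Xs. finite X \<Longrightarrow> finite {xs. list_all2 (\<in>) xs Xs}"
proof (induction Xs)
  case (Cons X Xs)
  have "{xs. list_all2 (\<in>) xs (X # Xs)} = (\<lambda>(x, xs). x # xs) ` (X \<times> {xs. list_all2 (\<in>) xs Xs})"
    by (auto simp: list_all2_Cons2 image_iff)
  then show ?case using Cons by simp
qed simp

lemma finite_prefixes: "finite (prefixes t)"
proof (induction t)
  case (Node s ts)
  then have "finite {cs. list_all2 (\<in>) cs (map prefixes ts)}"
    by (intro finite_list_all2_mem) auto
  then show ?case by simp
qed simp

lemma graft_subterms_prefixes:
  "graft t vs = (r, rest) \<Longrightarrow>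
     set (take (leaves t) vs) \<subseteq> subterms r \<and> rest = drop (leaves t) vs \<and> t \<in> prefixes r"
  "graftl cs vs = (rs, rest) \<Longrightarrow>
     set (take (sum_list (map leaves cs)) vs) \<subseteq> (\<Union>u\<in>set rs. subterms u)
     \<and> rest = drop (sum_list (map leaves cs)) vs \<and> list_all2 (\<lambda>c r. c \<in> prefixes r) cs rs"
proof (induction t vs and cs vs arbitrary: r rest and rs rest rule: graft_graftl.induct)
  case (3 s cs us)
  obtain cs' r' where "graftl cs us = (cs', r')" by fastforce
  with 3 show ?case by (fastforce simp: list_all2_map2)
next
  case (5 c cs us)
  obtain c' r1 where g1: "graft c us = (c', r1)" by fastforce
  obtain cs' r' where g2: "graftl cs r1 = (cs', r')" by fastforce
  from "5.prems" g1 g2 have "rs = c' # cs'" "rest = r'" by auto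
  moreover have "set (take (leaves c) us) \<subseteq> subterms c' \<and> r1 = drop (leaves c) us \<and> c \<in> prefixes c'"
    using "5.IH"(1) g1 by blast
  moreover have "set (take (sum_list (map leaves cs)) r1) \<subseteq> (\<Union>u\<in>set cs'. subterms u)
      \<and> r' = drop (sum_list (map leaves cs)) r1 \<and> list_all2 (\<lambda>c r. c \<in> prefixes r) cs cs'"
    using "5.IH"(2)[OF g1[symmetric] refl] g2 by blast
  ultimately show ?case
    by (auto simp: take_add add.commute dest: in_set_takeD)
qed (auto simp: Leaf_in_prefixes subterms_self)

text \<open>In a decomposition t = t'[t1,...,tk] the term t' is a prefix of t and the ti are subterms
  of t, so only finitely many decompositions exist.\<close>

lemma finite_decomps: "finite (decomps t)"
proof -
  define K where "K = Max (leaves ` prefixes t)"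
  have "decomps t \<subseteq> prefixes t \<times> {us. set us \<subseteq> subterms t \<and> length us \<le> K}"
  proof
    fix d assume "d \<in> decomps t"
    then obtain t' us where d: "d = (t', us)" "length us = leaves t'" "comp t' us = t"
      by (auto simp: decomps_def)
    then obtain rest where "graft t' us = (t, rest)"
      by (cases "graft t' us") (auto simp: comp_def)
    from graft_subterms_prefixes(1)[OF this] d have "t' \<in> prefixes t" "set us \<subseteq> subterms t"
      by auto
    moreover have "leaves t' \<le> K"
      unfolding K_def using \<open>t' \<in> prefixes t\<close> finite_prefixes[of t] by (intro Max_ge) auto
    ultimately show "d \<in> prefixes t \<times> {us. set us \<subseteq> subterms t \<and> length us \<le> K}"
      using d by auto
  qed
  moreover have "finite {us. set us \<subseteq> subterms t \<and> length us \<le> K}"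
    by (rule finite_lists_length_le[OF finite_subterms])
  ultimately show ?thesis
    using finite_prefixes by (meson finite_SigmaI rev_finite_subset)
qed

lemma length_graftl: "length (fst (graftl cs vs)) = length cs"
proof -
  obtain rs rest where "graftl cs vs = (rs, rest)" by fastforce
  with graft_subterms_prefixes(2)[OF this] show ?thesis
    by (auto dest: list_all2_lengthD)
qed

lemma comp_Leaf: "comp Leaf [u] = u"
  by (simp add: comp_def)

lemma comp_Node: "comp (Node r cs) us = Node r (fst (graftl cs us))"
  by (simp add: comp_def split: prod.split)

lemma decomps_Leaf_left: "(Leaf, us) \<in> decomps t \<longleftrightarrow> us = [t]"
  by (cases us) (auto simp: decomps_def comp_Leaf)

lemma decomps_Node_root: "(Node r cs, us) \<in> decomps t \<Longrightarrow> \<exists>ts. t = Node r ts"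
  by (auto simp: decomps_def comp_Node)

definition corolla :: "'a \<Rightarrow> nat \<Rightarrow> 'a tm" where
  "corolla s n = Node s (replicate n Leaf)"

lemma graftl_replicate_Leaf: "length us = n \<Longrightarrow> graftl (replicate n Leaf) us = (us, [])"
proof (induction n arbitrary: us)
  case (Suc n)
  then show ?case by (cases us) auto
qed simp

lemma leaves_corolla: "leaves (corolla s n) = n"
  by (induction n) (auto simp: corolla_def)

lemma comp_corolla: "length us = n \<Longrightarrow> comp (corolla s n) us = Node s us"
  by (simp add: corolla_def comp_Node graftl_replicate_Leaf)

lemma corolla_decomp: "(corolla s (length us), us) \<in> decomps (Node s us)"
  by (simp add: decomps_def leaves_corolla comp_corolla)

fun chain :: "'a \<Rightarrow> nat \<Rightarrow> 'a tm \<Rightarrow> 'a tm" where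
  "chain s 0 u = u"
| "chain s (Suc k) u = Node s [chain s k u]"

lemma graft_chain: "graft (chain s k Leaf) [u] = (chain s k u, [])"
  by (induction k) auto

lemma chain_chain: "chain s k (chain s j u) = chain s (k + j) u"
  by (induction k) auto

lemma leaves_chain: "leaves (chain s k Leaf) = 1"
  by (induction k) auto

lemma chain_Leaf_inject: "chain s k Leaf = chain s j Leaf \<longleftrightarrow> k = j"
proof (induction k arbitrary: j)
  case 0 then show ?case by (cases j) auto
next
  case (Suc k) then show ?case by (cases j) auto
qed

lemma decomps_chain:
  "decomps (chain s n Leaf) = (\<lambda>k. (chain s k Leaf, [chain s (n - k) Leaf])) ` {..n}"
proof
  show "(\<lambda>k. (chain s k Leaf, [chain s (n - k) Leaf])) ` {..n} \<subseteq> decomps (chain s n Leaf)"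
    by (auto simp: decomps_def comp_def graft_chain leaves_chain chain_chain)
next
  have "\<exists>k\<le>n. t' = chain s k Leaf \<and> us = [chain s (n - k) Leaf]"
    if "(t', us) \<in> decomps (chain s n Leaf)" for t' us
    using that
  proof (induction n arbitrary: t' us)
    case 0
    then show ?case
      by (cases t') (auto simp: decomps_Leaf_left dest: decomps_Node_root)
  next
    case (Suc m)
    show ?case
    proof (cases t')
      case Leaf
      with Suc.prems show ?thesis
        by (auto simp: decomps_Leaf_left intro!: exI[of _ 0])
    next
      case (Node r cs)
      with Suc.prems have "r = s" and g: "fst (graftl cs us) = [chain s m Leaf]"
        and "length us = leaves t'"
        by (auto simp: decomps_def comp_Node)
      moreover obtain c where c: "cs = [c]"
        using g length_graftl[of cs us] by (cases cs) auto
      ultimately have "(c, us) \<in> decomps (chain s m Leaf)"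
        using Node by (auto simp: decomps_def comp_def split: prod.splits)
      then obtain k where "k \<le> m" "c = chain s k Leaf" "us = [chain s (m - k) Leaf]"
        using Suc.IH by blast
      with Node c \<open>r = s\<close> show ?thesis by (auto intro!: exI[of _ "Suc k"])
    qed
  qed
  then show "decomps (chain s n Leaf) \<subseteq> (\<lambda>k. (chain s k Leaf, [chain s (n - k) Leaf])) ` {..n}"
    by auto
qed

lemma decomps_constant: "decomps (Node s []) = {(Leaf, [Node s []]), (Node s [], [])}"
proof -
  have "t' = Node s [] \<and> us = []"
    if "(t', us) \<in> decomps (Node s [])" "t' \<noteq> Leaf" for t' us
  proof -
    obtain r cs where t': "t' = Node r cs" using \<open>t' \<noteq> Leaf\<close> by (cases t') auto
    with that(1) have "r = s" "fst (graftl cs us) = []" "length us = leaves t'"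
      by (auto simp: decomps_def comp_Node)
    with t' show ?thesis using length_graftl[of cs us] by simp
  qed
  moreover have "(Node s [], []) \<in> decomps (Node s [])"
    by (simp add: decomps_def comp_Node)
  ultimately have "(t', us) \<in> decomps (Node s []) \<longleftrightarrow>
      (t', us) = (Leaf, [Node s []]) \<or> (t', us) = (Node s [], [])" for t' us
    by (cases "t' = Leaf") (auto simp: decomps_Leaf_left)
  then show ?thesis by auto
qed

lemma sum_keys_when:
  fixes p :: "'b \<Rightarrow>\<^sub>0 'k::comm_ring_1"
  shows "(\<Sum>a\<in>Poly_Mapping.keys p. (c * Poly_Mapping.lookup p a when a = q)) = c * Poly_Mapping.lookup p q"
proof (cases "q \<in> Poly_Mapping.keys p")
  case False
  then have "(\<Sum>a\<in>Poly_Mapping.keys p. (c * Poly_Mapping.lookup p a when a = q)) = 0"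
    by (intro sum.neutral) (auto simp: when_def)
  with False show ?thesis by (simp add: in_keys_iff)
qed (simp add: sum.delta' when_def)

lemma lookup_nmult: "Poly_Mapping.lookup (nmult x y) k =
  (\<Sum>f\<in>Poly_Mapping.keys x. \<Sum>g\<in>Poly_Mapping.keys y.
     (Poly_Mapping.lookup x f * Poly_Mapping.lookup y g when f @ g = k))"
  by (simp add: nmult_def lookup_sum lookup_single)

lemma lookup_tmult: "Poly_Mapping.lookup (tmult p q) k =
  (\<Sum>a\<in>Poly_Mapping.keys p. \<Sum>b\<in>Poly_Mapping.keys q.
     (Poly_Mapping.lookup p a * Poly_Mapping.lookup q b when (fst a @ fst b, snd a @ snd b) = k))"
  by (simp add: tmult_def lookup_sum lookup_single)

lemma lookup_tflip: "Poly_Mapping.lookup (tflip p) (a, b) = Poly_Mapping.lookup p (b, a)"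
proof -
  have "Poly_Mapping.lookup (tflip p) (a, b) =
      (\<Sum>k\<in>Poly_Mapping.keys p. (1 * Poly_Mapping.lookup p k when k = (b, a)))"
    unfolding tflip_def lookup_sum lookup_single
    by (intro sum.cong) (auto simp: when_def)
  then show ?thesis by (simp only: sum_keys_when) simp
qed

lemma lookup_ncoprod:
  fixes x :: "'a tm list \<Rightarrow>\<^sub>0 'k::field_char_0"
  shows "Poly_Mapping.lookup (ncoprod x) q =
   (\<Sum>f\<in>Poly_Mapping.keys x. Poly_Mapping.lookup x f * Poly_Mapping.lookup (cop_forest f :: _ \<Rightarrow>\<^sub>0 'k) q)"
  unfolding ncoprod_def lookup_sum lookup_single
  by (intro sum.cong refl sum_keys_when)

lemma lookup_cop_tm: "Poly_Mapping.lookup (cop_tm t :: _ \<Rightarrow>\<^sub>0 'k::field_char_0) q =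
   (\<Sum>d\<in>decomps t. ((1::'k) when (rd [fst d], rd (snd d)) = q))"
  by (simp add: cop_tm_def lookup_sum lookup_single)

lemma lookup_cop_tm_card:
  "Poly_Mapping.lookup (cop_tm t :: _ \<Rightarrow>\<^sub>0 'k::field_char_0) q =
   of_nat (card {d \<in> decomps t. (rd [fst d], rd (snd d)) = q})"
proof -
  have "Poly_Mapping.lookup (cop_tm t :: _ \<Rightarrow>\<^sub>0 'k) q =
      (\<Sum>d\<in>decomps t. if (rd [fst d], rd (snd d)) = q then 1 else 0)"
    by (simp add: lookup_cop_tm when_def)
  also have "\<dots> = (\<Sum>d\<in>{d \<in> decomps t. (rd [fst d], rd (snd d)) = q}. 1)"
    by (rule sum.inter_filter[OF finite_decomps, symmetric])
  finally show ?thesis by simp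
qed

lemma single_forest_in_NT:
  "reduced_forest S ar f \<Longrightarrow> Poly_Mapping.single f (1::'k::field_char_0) \<in> NT S ar"
  by (simp add: NT_def)

lemma append_commute_if_constant:
  assumes "\<forall>x\<in>set (f @ g). \<forall>y\<in>set (f @ g). x = y"
  shows "f @ g = g @ f"
proof (cases "f @ g = []")
  case False
  then obtain t0 where "t0 \<in> set (f @ g)" by (meson list.set_sel(1))
  with assms have "f = replicate (length f) t0" "g = replicate (length g) t0"
    by (simp_all add: replicate_length_same)
  then show ?thesis by (metis add.commute replicate_add)
qed simp

lemma NT_commutative_iff:
  "NT_commutative TYPE('k::field_char_0) S ar \<longleftrightarrow>
     (\<forall>u v. wf_tm S ar u \<and> u \<noteq> Leaf \<and> wf_tm S ar v \<and> v \<noteq> Leaf \<longrightarrow> u = v)"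
proof (intro iffI allI impI)
  fix u v assume comm: "NT_commutative TYPE('k) S ar"
    and uv: "wf_tm S ar u \<and> u \<noteq> Leaf \<and> wf_tm S ar v \<and> v \<noteq> Leaf"
  then have "nmult (Poly_Mapping.single [u] (1::'k)) (Poly_Mapping.single [v] 1) =
      nmult (Poly_Mapping.single [v] 1) (Poly_Mapping.single [u] 1)"
    unfolding NT_commutative_def by (simp add: single_forest_in_NT reduced_forest_def)
  then have "Poly_Mapping.lookup (nmult (Poly_Mapping.single [u] (1::'k)) (Poly_Mapping.single [v] 1)) [u, v] =
      Poly_Mapping.lookup (nmult (Poly_Mapping.single [v] 1) (Poly_Mapping.single [u] (1::'k))) [u, v]"
    by simp
  then show "u = v" by (auto simp: lookup_nmult when_def split: if_splits)
next
  assume unique: "\<forall>u v. wf_tm S ar u \<and> u \<noteq> Leaf \<and> wf_tm S ar v \<and> v \<noteq> Leaf \<longrightarrow> u = v"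
  show "NT_commutative TYPE('k) S ar"
    unfolding NT_commutative_def
  proof (intro ballI poly_mapping_eqI)
    fix x y :: "'a tm list \<Rightarrow>\<^sub>0 'k" and k
    assume x: "x \<in> NT S ar" and y: "y \<in> NT S ar"
    have commute: "f @ g = g @ f" if "f \<in> Poly_Mapping.keys x" "g \<in> Poly_Mapping.keys y" for f g
      using x y that unique by (intro append_commute_if_constant) (auto simp: NT_def reduced_forest_def)
    have "Poly_Mapping.lookup (nmult x y) k = (\<Sum>g\<in>Poly_Mapping.keys y. \<Sum>f\<in>Poly_Mapping.keys x.
        (Poly_Mapping.lookup x f * Poly_Mapping.lookup y g when f @ g = k))"
      unfolding lookup_nmult by (rule sum.swap)
    also have "\<dots> = Poly_Mapping.lookup (nmult y x) k"
      unfolding lookup_nmult using commute by (intro sum.cong refl) (auto simp: when_def mult.commute)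
    finally show "Poly_Mapping.lookup (nmult x y) k = Poly_Mapping.lookup (nmult y x) k" .
  qed
qed


definition symmetric_tensor :: "('b \<times> 'b \<Rightarrow>\<^sub>0 'k::zero) \<Rightarrow> bool" where
  "symmetric_tensor p \<longleftrightarrow> (\<forall>a b. Poly_Mapping.lookup p (a, b) = Poly_Mapping.lookup p (b, a))"

lemma tflip_eq_iff_symmetric_tensor: "tflip p = p \<longleftrightarrow> symmetric_tensor p"
  by (metis lookup_tflip poly_mapping_eqI surj_pair symmetric_tensor_def)

lemma sum_keys_swap:
  assumes "symmetric_tensor p"
  shows "(\<Sum>a\<in>Poly_Mapping.keys p. F a) = (\<Sum>a\<in>Poly_Mapping.keys p. F (prod.swap a))"
proof -
  have swap_key: "(b, a) \<in> Poly_Mapping.keys p" if "(a, b) \<in> Poly_Mapping.keys p" for a b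
    using assms that by (simp add: symmetric_tensor_def in_keys_iff)
  have "bij_betw prod.swap (Poly_Mapping.keys p) (Poly_Mapping.keys p)"
    by (rule bij_betw_byWitness[where f'=prod.swap]) (auto intro: swap_key)
  from sum.reindex_bij_betw[OF this, of F] show ?thesis by simp
qed

lemma symmetric_tensor_tmult:
  assumes "symmetric_tensor p" "symmetric_tensor q"
  shows "symmetric_tensor (tmult p q)"
  unfolding symmetric_tensor_def
proof (intro allI)
  fix a b
  let ?F = "\<lambda>x y. (Poly_Mapping.lookup p x * Poly_Mapping.lookup q y
                    when (fst x @ fst y, snd x @ snd y) = (b, a))"
  have "Poly_Mapping.lookup (tmult p q) (b, a) =
      (\<Sum>x\<in>Poly_Mapping.keys p. \<Sum>y\<in>Poly_Mapping.keys q. ?F x y)"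
    by (rule lookup_tmult)
  also have "\<dots> = (\<Sum>x\<in>Poly_Mapping.keys p. \<Sum>y\<in>Poly_Mapping.keys q. ?F x (prod.swap y))"
    by (intro sum.cong refl sum_keys_swap[OF assms(2)])
  also have "\<dots> = (\<Sum>x\<in>Poly_Mapping.keys p. \<Sum>y\<in>Poly_Mapping.keys q. ?F (prod.swap x) (prod.swap y))"
    by (rule sum_keys_swap[OF assms(1)])
  also have "\<dots> = Poly_Mapping.lookup (tmult p q) (a, b)"
    unfolding lookup_tmult using assms unfolding symmetric_tensor_def
    by (intro sum.cong refl) (auto simp: when_def prod.swap_def)
  finally show "Poly_Mapping.lookup (tmult p q) (a, b) = Poly_Mapping.lookup (tmult p q) (b, a)"
    by simp
qed

lemma symmetric_tensor_cop_forest: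
  assumes "\<And>t. t \<in> set f \<Longrightarrow> symmetric_tensor (cop_tm t :: _ \<Rightarrow>\<^sub>0 'k::field_char_0)"
  shows "symmetric_tensor (cop_forest f :: _ \<Rightarrow>\<^sub>0 'k)"
  using assms
proof (induction f)
  case Nil
  show ?case by (simp add: symmetric_tensor_def lookup_single when_def)
next
  case (Cons t f)
  then show ?case by (simp add: symmetric_tensor_tmult)
qed

lemma tmult_unit_right: "tmult p (Poly_Mapping.single ([], []) 1) = p"
  by (rule poly_mapping_eqI) (simp add: lookup_tmult sum_keys_when[of 1, simplified])

lemma ncoprod_single: "ncoprod (Poly_Mapping.single f (1::'k::field_char_0)) = cop_forest f"
  by (rule poly_mapping_eqI) (simp add: lookup_ncoprod)

lemma NT_cocommutative_iff:
  "NT_cocommutative TYPE('k::field_char_0) S ar \<longleftrightarrow>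
     (\<forall>t. wf_tm S ar t \<and> t \<noteq> Leaf \<longrightarrow> symmetric_tensor (cop_tm t :: _ \<Rightarrow>\<^sub>0 'k))"
proof (intro iffI allI impI)
  fix t assume "NT_cocommutative TYPE('k) S ar" "wf_tm S ar t \<and> t \<noteq> Leaf"
  then have "tflip (ncoprod (Poly_Mapping.single [t] (1::'k))) = ncoprod (Poly_Mapping.single [t] 1)"
    unfolding NT_cocommutative_def by (simp add: single_forest_in_NT reduced_forest_def)
  then show "symmetric_tensor (cop_tm t :: _ \<Rightarrow>\<^sub>0 'k)"
    by (simp add: tflip_eq_iff_symmetric_tensor ncoprod_single tmult_unit_right)
next
  assume symmetric: "\<forall>t. wf_tm S ar t \<and> t \<noteq> Leaf \<longrightarrow> symmetric_tensor (cop_tm t :: _ \<Rightarrow>\<^sub>0 'k)"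
  have "symmetric_tensor (ncoprod x)" if "x \<in> NT S ar" for x :: "_ \<Rightarrow>\<^sub>0 'k"
  proof -
    have "symmetric_tensor (cop_forest f :: _ \<Rightarrow>\<^sub>0 'k)" if "f \<in> Poly_Mapping.keys x" for f
      using symmetric \<open>x \<in> NT S ar\<close> that
      by (intro symmetric_tensor_cop_forest) (auto simp: NT_def reduced_forest_def)
    then show ?thesis
      by (simp add: symmetric_tensor_def lookup_ncoprod)
  qed
  then show "NT_cocommutative TYPE('k) S ar"
    by (simp add: NT_cocommutative_def tflip_eq_iff_symmetric_tensor)
qed

text \<open>Coefficients of the coproduct count decompositions, so a decomposition type
  without a mirror image breaks symmetry; this is where finiteness of the set of decompositions is needed.\<close>

lemma cop_tm_not_symmetric:
  assumes "d0 \<in> decomps t" "(rd [fst d0], rd (snd d0)) = (f, g)"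
    and "\<forall>d\<in>decomps t. (rd [fst d], rd (snd d)) \<noteq> (g, f)"
  shows "\<not> symmetric_tensor (cop_tm t :: _ \<Rightarrow>\<^sub>0 'k::field_char_0)"
proof
  define of_type where "of_type q = {d \<in> decomps t. (rd [fst d], rd (snd d)) = q}" for q
  assume "symmetric_tensor (cop_tm t :: _ \<Rightarrow>\<^sub>0 'k)"
  then have "Poly_Mapping.lookup (cop_tm t :: _ \<Rightarrow>\<^sub>0 'k) (f, g) = Poly_Mapping.lookup (cop_tm t) (g, f)"
    by (simp add: symmetric_tensor_def)
  then have "card (of_type (f, g)) = card (of_type (g, f))"
    unfolding lookup_cop_tm_card of_type_def of_nat_eq_iff .
  moreover have "of_type (g, f) = {}"
    using assms(3) by (auto simp: of_type_def)
  moreover have "d0 \<in> of_type (f, g)" "finite (of_type (f, g))"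
    using assms(1,2) finite_decomps[of t] by (auto simp: of_type_def)
  ultimately show False
    by (auto simp: card_eq_0_iff)
qed

lemma cop_tm_constant_symmetric: "symmetric_tensor (cop_tm (Node s []) :: _ \<Rightarrow>\<^sub>0 'k::field_char_0)"
  by (auto simp: symmetric_tensor_def lookup_cop_tm decomps_constant rd_def when_def)

lemma cop_tm_chain_symmetric: "symmetric_tensor (cop_tm (chain s n Leaf) :: _ \<Rightarrow>\<^sub>0 'k::field_char_0)"
  unfolding symmetric_tensor_def
proof (intro allI)
  fix a b
  let ?F = "\<lambda>q k. ((1::'k) when (rd [chain s k Leaf], rd [chain s (n - k) Leaf]) = q)"
  have "inj_on (\<lambda>k. (chain s k Leaf, [chain s (n - k) Leaf])) {..n}"
    by (auto simp: inj_on_def chain_Leaf_inject)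
  then have lookup: "Poly_Mapping.lookup (cop_tm (chain s n Leaf) :: _ \<Rightarrow>\<^sub>0 'k) q = (\<Sum>k\<le>n. ?F q k)"
    for q by (simp add: lookup_cop_tm decomps_chain sum.reindex)
  have "(\<Sum>k\<le>n. ?F (a, b) k) = (\<Sum>k\<le>n. ?F (a, b) (n - k))"
    by (rule sum.reindex_bij_witness[where i="\<lambda>k. n - k" and j="\<lambda>k. n - k"]) auto
  also have "\<dots> = (\<Sum>k\<le>n. ?F (b, a) k)"
    by (intro sum.cong refl) (auto simp: when_def)
  finally show "Poly_Mapping.lookup (cop_tm (chain s n Leaf) :: _ \<Rightarrow>\<^sub>0 'k) (a, b) =
      Poly_Mapping.lookup (cop_tm (chain s n Leaf) :: _ \<Rightarrow>\<^sub>0 'k) (b, a)"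
    by (simp only: lookup)
qed

lemma length_rd_singleton: "length (rd [u]) \<le> 1"
  by (simp add: rd_def)

text \<open>The left factor of a decomposition is a single tree, so E_c \<otimes> E_(rd us) has no
  mirror image once rd us has two trees.\<close>

lemma cop_tm_not_symmetric_if_two_children:
  assumes "2 \<le> length (rd us)"
  shows "\<not> symmetric_tensor (cop_tm (Node s us) :: _ \<Rightarrow>\<^sub>0 'k::field_char_0)"
proof (rule cop_tm_not_symmetric[OF corolla_decomp])
  show "(rd [fst (corolla s (length us), us)], rd (snd (corolla s (length us), us))) =
      ([corolla s (length us)], rd us)"
    by (simp add: rd_def corolla_def)
  have "rd [fst d] \<noteq> rd us" for d
    using length_rd_singleton[of "fst d"] assms by auto
  then show "\<forall>d\<in>decomps (Node s us). (rd [fst d], rd (snd d)) \<noteq> (rd us, [corolla s (length us)])"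
    by auto
qed

lemma cop_tm_not_symmetric_unary:
  assumes "r \<noteq> s"
  shows "\<not> symmetric_tensor (cop_tm (Node s [Node r cs]) :: _ \<Rightarrow>\<^sub>0 'k::field_char_0)"
proof (rule cop_tm_not_symmetric[OF corolla_decomp])
  show "(rd [fst (corolla s (length [Node r cs]), [Node r cs])],
         rd (snd (corolla s (length [Node r cs]), [Node r cs]))) =
      ([corolla s 1], [Node r cs])"
    by (simp add: rd_def corolla_def)
  have "fst d \<noteq> Node r cs" if "d \<in> decomps (Node s [Node r cs])" for d
    using that decomps_Node_root[of r cs "snd d"] assms by (cases d) auto
  then show "\<forall>d\<in>decomps (Node s [Node r cs]). (rd [fst d], rd (snd d)) \<noteq> ([Node r cs], [corolla s 1])"
    by (auto simp: rd_def split: if_splits)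
qed

lemma wf_tm_corolla: "s \<in> S \<Longrightarrow> wf_tm S ar (corolla s (ar s))"
  by (simp add: corolla_def)

lemma wf_tm_unary_chain: "S = {s} \<Longrightarrow> ar s = 1 \<Longrightarrow> wf_tm S ar t \<Longrightarrow> \<exists>n. t = chain s n Leaf"
proof (induction t)
  case Leaf
  show ?case by (auto intro: exI[of _ 0])
next
  case (Node r ts)
  then obtain u where "ts = [u]" "r = s" by (cases ts) auto
  with Node obtain n where "u = chain s n Leaf" by auto
  with \<open>ts = [u]\<close> \<open>r = s\<close> show ?case by (auto intro: exI[of _ "Suc n"])
qed

lemma unique_term_iff:
  "(\<forall>u v. wf_tm S ar u \<and> u \<noteq> Leaf \<and> wf_tm S ar v \<and> v \<noteq> Leaf \<longrightarrow> u = v) \<longleftrightarrow>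
     S = {} \<or> (\<exists>s. S = {s} \<and> ar s = 0)"
proof
  assume unique: "\<forall>u v. wf_tm S ar u \<and> u \<noteq> Leaf \<and> wf_tm S ar v \<and> v \<noteq> Leaf \<longrightarrow> u = v"
  have nullary: "ar s = 0" if "s \<in> S" for s
  proof (rule ccontr)
    assume "ar s \<noteq> 0"
    have "wf_tm S ar (Node s (corolla s (ar s) # replicate (ar s - 1) Leaf))"
      using that \<open>ar s \<noteq> 0\<close> by (simp add: wf_tm_corolla)
    moreover have "corolla s (ar s) \<noteq> Leaf" by (simp add: corolla_def)
    moreover have "corolla s (ar s) \<noteq> Node s (corolla s (ar s) # replicate (ar s - 1) Leaf)"
      by (cases "ar s") (simp_all add: corolla_def)
    ultimately show False
      using unique wf_tm_corolla[OF that] by (metis tm.distinct(1))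
  qed
  have "r = s" if "r \<in> S" "s \<in> S" for r s
    using unique[rule_format, of "Node r []" "Node s []"] that nullary[OF that(1)] nullary[OF that(2)]
    by simp
  with nullary show "S = {} \<or> (\<exists>s. S = {s} \<and> ar s = 0)" by blast
next
  assume "S = {} \<or> (\<exists>s. S = {s} \<and> ar s = 0)"
  then show "\<forall>u v. wf_tm S ar u \<and> u \<noteq> Leaf \<and> wf_tm S ar v \<and> v \<noteq> Leaf \<longrightarrow> u = v"
  proof (elim disjE exE conjE; intro allI impI)
    fix u v assume "S = {}" "wf_tm S ar u \<and> u \<noteq> Leaf \<and> wf_tm S ar v \<and> v \<noteq> Leaf"
    then show "u = v" by (cases u) auto
  next
    fix s u v assume "S = {s}" "ar s = 0" "wf_tm S ar u \<and> u \<noteq> Leaf \<and> wf_tm S ar v \<and> v \<noteq> Leaf"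
    then show "u = v" by (cases u; cases v) auto
  qed
qed

lemma cop_tm_symmetric_iff:
  "(\<forall>t. wf_tm S ar t \<and> t \<noteq> Leaf \<longrightarrow> symmetric_tensor (cop_tm t :: _ \<Rightarrow>\<^sub>0 'k::field_char_0)) \<longleftrightarrow>
     (\<forall>s\<in>S. ar s = 0) \<or> (\<exists>s. S = {s} \<and> ar s = 1)"
proof
  assume symmetric: "\<forall>t. wf_tm S ar t \<and> t \<noteq> Leaf \<longrightarrow> symmetric_tensor (cop_tm t :: _ \<Rightarrow>\<^sub>0 'k)"
  have at_most_unary: "ar s \<le> 1" if "s \<in> S" for s
  proof (rule ccontr)
    define c where "c = corolla s (ar s)"
    assume "\<not> ar s \<le> 1"
    then have wf: "wf_tm S ar (Node s (c # c # replicate (ar s - 2) Leaf))"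
      using that by (simp add: c_def wf_tm_corolla)
    have "2 \<le> length (rd (c # c # replicate (ar s - 2) Leaf))"
      by (simp add: rd_def c_def corolla_def)
    then have "\<not> symmetric_tensor (cop_tm (Node s (c # c # replicate (ar s - 2) Leaf)) :: _ \<Rightarrow>\<^sub>0 'k)"
      by (rule cop_tm_not_symmetric_if_two_children)
    with symmetric[rule_format, OF conjI[OF wf tm.distinct(2)]] show False
      by contradiction
  qed
  have unary_alone: "r = s" if "s \<in> S" "ar s = 1" "r \<in> S" for r s
  proof (rule ccontr)
    assume "r \<noteq> s"
    have wf: "wf_tm S ar (Node s [corolla r (ar r)])"
      using that by (simp add: wf_tm_corolla)
    have "\<not> symmetric_tensor (cop_tm (Node s [corolla r (ar r)]) :: _ \<Rightarrow>\<^sub>0 'k)"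
      unfolding corolla_def by (rule cop_tm_not_symmetric_unary[OF \<open>r \<noteq> s\<close>])
    with symmetric[rule_format, OF conjI[OF wf tm.distinct(2)]] show False
      by contradiction
  qed
  show "(\<forall>s\<in>S. ar s = 0) \<or> (\<exists>s. S = {s} \<and> ar s = 1)"
  proof (cases "\<forall>s\<in>S. ar s = 0")
    case False
    then obtain s where "s \<in> S" "ar s \<noteq> 0" by blast
    with at_most_unary[OF \<open>s \<in> S\<close>] have "ar s = 1" by simp
    then have "S = {s}"
      using unary_alone[OF \<open>s \<in> S\<close>] \<open>s \<in> S\<close> by blast
    with \<open>ar s = 1\<close> show ?thesis by blast
  qed simp
next
  assume "(\<forall>s\<in>S. ar s = 0) \<or> (\<exists>s. S = {s} \<and> ar s = 1)"
  then show "\<forall>t. wf_tm S ar t \<and> t \<noteq> Leaf \<longrightarrow> symmetric_tensor (cop_tm t :: _ \<Rightarrow>\<^sub>0 'k)"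
  proof (elim disjE exE conjE; intro allI impI)
    fix t assume "\<forall>s\<in>S. ar s = 0" "wf_tm S ar t \<and> t \<noteq> Leaf"
    then obtain s where "t = Node s []" by (cases t) auto
    then show "symmetric_tensor (cop_tm t :: _ \<Rightarrow>\<^sub>0 'k)" by (simp add: cop_tm_constant_symmetric)
  next
    fix s t assume "S = {s}" "ar s = 1" "wf_tm S ar t \<and> t \<noteq> Leaf"
    then obtain n where "t = chain s n Leaf"
      using wf_tm_unary_chain[of S s ar t] by auto
    then show "symmetric_tensor (cop_tm t :: _ \<Rightarrow>\<^sub>0 'k)" by (simp add: cop_tm_chain_symmetric)
  qed
qed

theorem proposition3p2:
  fixes S :: "'a set" and ar :: "'a \<Rightarrow> nat"
  assumes fin: "\<And>n. finite {s \<in> S. ar s = n}"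
  shows "(NT_commutative TYPE('k::field_char_0) S ar \<longleftrightarrow>
            (S = {} \<or> (\<exists>s. S = {s} \<and> ar s = 0)))
       \<and> (NT_cocommutative TYPE('k::field_char_0) S ar \<longleftrightarrow>
            ((\<forall>s\<in>S. ar s = 0) \<or> (\<exists>s. S = {s} \<and> ar s = 1)))"
proof
  show "NT_commutative TYPE('k) S ar \<longleftrightarrow> S = {} \<or> (\<exists>s. S = {s} \<and> ar s = 0)"
    unfolding NT_commutative_iff by (rule unique_term_iff)
  show "NT_cocommutative TYPE('k) S ar \<longleftrightarrow> (\<forall>s\<in>S. ar s = 0) \<or> (\<exists>s. S = {s} \<and> ar s = 1)"
    unfolding NT_cocommutative_iff by (rule cop_tm_symmetric_iff)
qed

end
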